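(* Let $A=\{a_1,a_2,a_3,a_4\}$ (discrete) and give $\vec X$ the structure $\iota(a_1)=(0)_1$, $\iota(a_2)=(0)_2$, $\iota(a_3)=(1)_1$, $\iota(a_4)=(1)_2$. Then for every map $\iota_{\vec I}\colon A\to\vec I$ (the four image points not necessarily distinct), $(\vec X,\iota)$ is not dihomotopy equivalent to $(\vec I,\iota_{\vec I})$ in $A$-Posp.
   Context: A pospace is a topological space $U$ with a partial order that is a closed subset of $U\times U$; a dimap is a continuous order-preserving map; products carry the componentwise order. $\vec I=[0,1]$ with its usual order. $\vec X$ is the quotient of two copies $\vec I_1,\vec I_2$ of $\vec I$ obtained by identifying $(1/2)_1$ with $(1/2)_2$, ordered by: $(s)_i\le(t)_j$ iff either $i=j$ and $s\le t$, or $s\le1/2\le t$. Fix a pospace $A$. The category $A$-Posp has objects dimaps $\iota_B\colon A\to B$ and morphisms dimaps $f\colon B\to C$ with $f\circ\iota_B=\iota_C$. For morphisms $f,g\colon B\to C$ in $A$-Posp, a dihomotopy from $f$ to $g$ is a dimap $\phi\colon B\times\vec I\to C$ with $\phi(\cdot,0)=f$, $\phi(\cdot,1)=g$ and $\phi(\iota_B(a),t)=\iota_C(a)$ for all $a\in A$, $t$. Write $f\simeq g$ if there is a finite zigzag of such dihomotopies. A morphism $f\colon B\to C$ in $A$-Posp is a dihomotopy equivalence if there is a morphism $g\colon C\to B$ in $A$-Posp with $g\circ f\simeq\mathrm{Id}_B$ and $f\circ g\simeq\mathrm{Id}_C$. *)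

theory Defs
  imports "HOL-Analysis.Analysis"
begin

record 'a pos =
  ptop :: "'a topology"
  pord :: "'a \<Rightarrow> 'a \<Rightarrow> bool"

definition pospace :: "'a pos \<Rightarrow> bool" where
  "pospace U \<longleftrightarrow>
     partial_order_on (topspace (ptop U))
       {(x, y). x \<in> topspace (ptop U) \<and> y \<in> topspace (ptop U) \<and> pord U x y} \<and>
     closedin (prod_topology (ptop U) (ptop U))
       {(x, y). x \<in> topspace (ptop U) \<and> y \<in> topspace (ptop U) \<and> pord U x y}"

definition dimap :: "'a pos \<Rightarrow> 'b pos \<Rightarrow> ('a \<Rightarrow> 'b) \<Rightarrow> bool" where
  "dimap U V f \<longleftrightarrow> continuous_map (ptop U) (ptop V) f \<and>
     (\<forall>x\<in>topspace (ptop U). \<forall>y\<in>topspace (ptop U). pord U x y \<longrightarrow> pord V (f x) (f y))"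

definition pos_prod :: "'a pos \<Rightarrow> 'b pos \<Rightarrow> ('a \<times> 'b) pos" where
  "pos_prod U V = \<lparr> ptop = prod_topology (ptop U) (ptop V),
                    pord = (\<lambda>(x, s) (y, t). pord U x y \<and> pord V s t) \<rparr>"

definition dI :: "real pos" where
  "dI = \<lparr> ptop = top_of_set {0..1}, pord = (\<le>) \<rparr>"

definition Amorph :: "'a pos \<Rightarrow> 'b pos \<Rightarrow> ('a \<Rightarrow> 'b) \<Rightarrow> 'c pos \<Rightarrow> ('a \<Rightarrow> 'c)
                       \<Rightarrow> ('b \<Rightarrow> 'c) \<Rightarrow> bool" where
  "Amorph A B iB C iC f \<longleftrightarrow> dimap B C f \<and> (\<forall>a\<in>topspace (ptop A). f (iB a) = iC a)"

definition dihomotopy :: "'a pos \<Rightarrow> 'b pos \<Rightarrow> ('a \<Rightarrow> 'b) \<Rightarrow> 'c pos \<Rightarrow> ('a \<Rightarrow> 'c)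
                       \<Rightarrow> ('b \<Rightarrow> 'c) \<Rightarrow> ('b \<Rightarrow> 'c) \<Rightarrow> ('b \<times> real \<Rightarrow> 'c) \<Rightarrow> bool" where
  "dihomotopy A B iB C iC f g \<phi> \<longleftrightarrow>
     Amorph A B iB C iC f \<and> Amorph A B iB C iC g \<and>
     dimap (pos_prod B dI) C \<phi> \<and>
     (\<forall>x\<in>topspace (ptop B). \<phi> (x, 0) = f x \<and> \<phi> (x, 1) = g x) \<and>
     (\<forall>a\<in>topspace (ptop A). \<forall>t\<in>{0..1}. \<phi> (iB a, t) = iC a)"

definition dihomotopic1 :: "'a pos \<Rightarrow> 'b pos \<Rightarrow> ('a \<Rightarrow> 'b) \<Rightarrow> 'c pos \<Rightarrow> ('a \<Rightarrow> 'c)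
                       \<Rightarrow> ('b \<Rightarrow> 'c) \<Rightarrow> ('b \<Rightarrow> 'c) \<Rightarrow> bool" where
  "dihomotopic1 A B iB C iC f g \<longleftrightarrow> (\<exists>\<phi>. dihomotopy A B iB C iC f g \<phi>)"

text \<open>Finite zigzags of dihomotopies (the equivalence relation generated; reflexivity
  on morphisms is witnessed by constant dihomotopies).\<close>
definition dihomotopic :: "'a pos \<Rightarrow> 'b pos \<Rightarrow> ('a \<Rightarrow> 'b) \<Rightarrow> 'c pos \<Rightarrow> ('a \<Rightarrow> 'c)
                       \<Rightarrow> ('b \<Rightarrow> 'c) \<Rightarrow> ('b \<Rightarrow> 'c) \<Rightarrow> bool" where
  "dihomotopic A B iB C iC f g \<longleftrightarrow>
     (\<lambda>h k. dihomotopic1 A B iB C iC h k \<or> dihomotopic1 A B iB C iC k h)\<^sup>*\<^sup>* f g"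

definition dihomotopy_equivalent :: "'a pos \<Rightarrow> 'b pos \<Rightarrow> ('a \<Rightarrow> 'b) \<Rightarrow> 'c pos
                       \<Rightarrow> ('a \<Rightarrow> 'c) \<Rightarrow> bool" where
  "dihomotopy_equivalent A B iB C iC \<longleftrightarrow>
     (\<exists>f g. Amorph A B iB C iC f \<and> Amorph A C iC B iB g \<and>
            dihomotopic A B iB B iB (g \<circ> f) id \<and>
            dihomotopic A C iC C iC (f \<circ> g) id)"

text \<open>The pospace X: two copies of [0,1] (points (i,s), i in {1,2}) glued at 1/2,
  carrying the quotient topology. Canonical representative of the glued point: (1,1/2).\<close>
definition X_pre :: "(nat \<times> real) topology" where
  "X_pre = prod_topology (discrete_topology {1, 2}) (top_of_set {0..1})"

definition X_quot :: "nat \<times> real \<Rightarrow> nat \<times> real" where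
  "X_quot p = (if snd p = 1/2 then (1, 1/2) else p)"

definition X_carrier :: "(nat \<times> real) set" where
  "X_carrier = X_quot ` topspace X_pre"

definition X_top :: "(nat \<times> real) topology" where
  "X_top = topology (\<lambda>U. U \<subseteq> X_carrier \<and> openin X_pre {p \<in> topspace X_pre. X_quot p \<in> U})"

definition X_ord :: "nat \<times> real \<Rightarrow> nat \<times> real \<Rightarrow> bool" where
  "X_ord p q \<longleftrightarrow> (fst p = fst q \<and> snd p \<le> snd q) \<or> (snd p \<le> 1/2 \<and> 1/2 \<le> snd q)"

definition dX :: "(nat \<times> real) pos" where
  "dX = \<lparr> ptop = X_top, pord = X_ord \<rparr>"

text \<open>The discrete pospace A = {a1,a2,a3,a4}, encoded as {1,2,3,4}.\<close>
definition A4 :: "nat pos" where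
  "A4 = \<lparr> ptop = discrete_topology {1, 2, 3, 4}, pord = (=) \<rparr>"

definition iota_X :: "nat \<Rightarrow> nat \<times> real" where
  "iota_X a = (if a = 1 then (1, 0) else if a = 2 then (2, 0) else if a = 3 then (1, 1) else (2, 1))"

end

theory Submission
  imports Defs
begin

text \<open>There is not even a morphism from \<open>(I, \<iota>\<^sub>I)\<close> to \<open>(X, \<iota>)\<close> in \<open>A\<close>-Posp: it would
  have to send \<open>\<iota>\<^sub>I(a\<^sub>1)\<close> and \<open>\<iota>\<^sub>I(a\<^sub>2)\<close>, which are comparable because the directed
  interval is totally ordered, to the incomparable points \<open>(0)\<^sub>1\<close> and \<open>(0)\<^sub>2\<close> of \<open>X\<close>.\<close>

lemma dihomotopy_equivalent_imp_Amorph_converse: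
  assumes "dihomotopy_equivalent A B iB C iC"
  obtains g where "Amorph A C iC B iB g"
  using assms unfolding dihomotopy_equivalent_def by blast

lemma Amorph_preserves_base_order:
  assumes "Amorph A B iB C iC g"
    and "a \<in> topspace (ptop A)" "b \<in> topspace (ptop A)"
    and "iB a \<in> topspace (ptop B)" "iB b \<in> topspace (ptop B)"
    and "pord B (iB a) (iB b)"
  shows "pord C (iC a) (iC b)"
proof -
  have "pord C (g (iB a)) (g (iB b))"
    using assms unfolding Amorph_def dimap_def by blast
  then show ?thesis
    using assms(1-3) unfolding Amorph_def by simp
qed

lemma dimap_in_topspace:
  "dimap U V f \<Longrightarrow> x \<in> topspace (ptop U) \<Longrightarrow> f x \<in> topspace (ptop V)"
  unfolding dimap_def continuous_map_def by blast

lemma X_ord_bottoms_incomparable: "\<not> X_ord (iota_X 1) (iota_X 2)" "\<not> X_ord (iota_X 2) (iota_X 1)"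
  by (simp_all add: X_ord_def iota_X_def)

theorem mainTheorem8:
  fixes iota_I :: "nat \<Rightarrow> real"
  assumes "dimap A4 dI iota_I"
  shows "\<not> dihomotopy_equivalent A4 dX iota_X dI iota_I"
proof
  assume "dihomotopy_equivalent A4 dX iota_X dI iota_I"
  then obtain g where g: "Amorph A4 dI iota_I dX iota_X g"
    by (rule dihomotopy_equivalent_imp_Amorph_converse)
  have base: "a \<in> topspace (ptop A4)" "iota_I a \<in> topspace (ptop dI)" if "a \<in> {1, 2}" for a
    using that dimap_in_topspace[OF assms] by (auto simp: A4_def)
  have "pord dI (iota_I 1) (iota_I 2) \<or> pord dI (iota_I 2) (iota_I 1)"
    by (auto simp: dI_def)
  then have "X_ord (iota_X 1) (iota_X 2) \<or> X_ord (iota_X 2) (iota_X 1)"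
    using Amorph_preserves_base_order[OF g] base by (auto simp: dX_def)
  then show False
    using X_ord_bottoms_incomparable by blast
qed

end
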